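(* Let $a,b\in\mathbb{B}^2\setminus\{0\}$ be distinct points with $|a|\neq|b|$ lying on a circle orthogonal to the unit circle. Put $\alpha=a(1-|b|^2)+b(1-|a|^2)$ and \[ \mathrm{cen}=\frac{\alpha}{2-a\overline{b}-\overline{a}b},\qquad p=\frac{\alpha}{2-|a|^2-|b|^2},\qquad m_{ab}=\frac{\alpha}{1-|a|^2|b|^2+\sqrt{(1-|a|^2)(1-|b|^2)}\,|1-\overline{a}b|}. \] Then $m_{ab}$ is the hyperbolic midpoint of the segment $[\mathrm{cen},p]$, i.e. $\rho_{\mathbb{B}^2}(\mathrm{cen},m_{ab})=\rho_{\mathbb{B}^2}(m_{ab},p)$. Moreover, $B^2(\mathrm{cen},|\mathrm{cen}-a|)=B_\rho\bigl(m_{ab},\rho_{\mathbb{B}^2}(a,b)/2\bigr)$.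
   Context: $\mathbb{B}^2$ is the unit disk in $\mathbb{C}$. The hyperbolic metric is given by $\mathrm{sh}\frac{\rho_{\mathbb{B}^2}(x,y)}{2}=\frac{|x-y|}{\sqrt{(1-|x|^2)(1-|y|^2)}}$ for $x,y\in\mathbb{B}^2$. $B^2(x,r)$ is the Euclidean disk with center $x$ and radius $r$, and $B_\rho(x,M)=\{y\in\mathbb{B}^2:\rho_{\mathbb{B}^2}(x,y)<M\}$ is the hyperbolic disk. (The point $m_{ab}$ is the hyperbolic midpoint of $a$ and $b$; $\mathrm{cen}$ is the intersection of the tangent lines at $a$ and $b$ to the hyperbolic geodesic circle through $a,b$; $p$ is the intersection of the line through $0$ and $\mathrm{cen}$ with the segment $[a,b]$.) *)

theory Defs
  imports "HOL-Analysis.Analysis"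
begin

definition hrho :: "complex \<Rightarrow> complex \<Rightarrow> real" where
  "hrho x y = 2 * arsinh (cmod (x - y) / sqrt ((1 - (cmod x)\<^sup>2) * (1 - (cmod y)\<^sup>2)))"

definition hball :: "complex \<Rightarrow> real \<Rightarrow> complex set" where
  "hball x M = {y. cmod y < 1 \<and> hrho x y < M}"

end

theory Submission
  imports Defs
begin

text \<open>With \<open>\<sigma> = 1 - |a|^2 |b|^2\<close>, \<open>q = sqrt ((1 - |a|^2) (1 - |b|^2))\<close> and
  \<open>w = |1 - cnj a b|\<close>, the points cen, p and m_ab are \<open>\<alpha> / (\<sigma> + w^2)\<close>, \<open>\<alpha> / (\<sigma> + q^2)\<close> and
  \<open>\<alpha> / (\<sigma> + q w)\<close>, and \<open>|\<alpha>|^2 = \<sigma>^2 - q^2 w^2\<close>. Along a ray through 0 the hyperbolic distance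
  between \<open>z / s\<close> and \<open>z / t\<close> is explicit, and for these three denominators the two distances
  coincide.

  A hyperbolic disk \<open>B_rho(m, M)\<close> is the Euclidean disk \<open>|m - y|^2 < k (1 - |y|^2)\<close> with
  \<open>k = sinh^2 (M/2) (1 - |m|^2)\<close>, whose Euclidean centre is \<open>m / (1 + k)\<close>. Since m_ab is the
  hyperbolic midpoint of a and b, the point a lies on the boundary of \<open>B_rho(m_ab, rho(a,b)/2)\<close>,
  and \<open>cosh (rho(a,b)/2) = w / q\<close> turns \<open>m_ab / (1 + k)\<close> into cen.\<close>

lemma cmod_diff_sq: "(cmod (x - y))\<^sup>2 = (cmod x)\<^sup>2 - 2 * Re (x * cnj y) + (cmod y)\<^sup>2"
  by (simp only: cmod_power2) (simp add: power2_eq_square algebra_simps)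

lemma cmod_one_minus_cnj_mult_sq:
  "(cmod (1 - cnj a * b))\<^sup>2 = (1 - (cmod a)\<^sup>2) * (1 - (cmod b)\<^sup>2) + (cmod (a - b))\<^sup>2"
  by (simp only: cmod_power2) (simp add: power2_eq_square algebra_simps)

lemma hrho_eq_arsinh_sqrt:
  "hrho x y = 2 * arsinh (sqrt ((cmod (x - y))\<^sup>2 / ((1 - (cmod x)\<^sup>2) * (1 - (cmod y)\<^sup>2))))"
  unfolding hrho_def by (simp add: real_sqrt_divide)

text \<open>The hypotheses matter: \<open>sqrt\<close> of a negative real is negative in HOL.\<close>

lemma hrho_nonneg:
  assumes "cmod x < 1" "cmod y < 1"
  shows "0 \<le> hrho x y"
proof -
  have "0 \<le> (1 - (cmod x)\<^sup>2) * (1 - (cmod y)\<^sup>2)"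
    using assms by (simp add: abs_square_le_1 less_imp_le)
  then have "0 \<le> cmod (x - y) / sqrt ((1 - (cmod x)\<^sup>2) * (1 - (cmod y)\<^sup>2))"
    by simp
  then show ?thesis
    unfolding hrho_def by (simp add: not_less[symmetric])
qed

lemma sinh_half_hrho_sq:
  assumes "cmod x < 1" "cmod y < 1"
  shows "(sinh (hrho x y / 2))\<^sup>2 = (cmod (x - y))\<^sup>2 / ((1 - (cmod x)\<^sup>2) * (1 - (cmod y)\<^sup>2))"
proof -
  have "0 \<le> (1 - (cmod x)\<^sup>2) * (1 - (cmod y)\<^sup>2)"
    using assms by (simp add: abs_square_le_1 less_imp_le)
  then show ?thesis
    unfolding hrho_eq_arsinh_sqrt by simp
qed

lemma hrho_less_iff:
  assumes "cmod x < 1" "cmod y < 1" "0 \<le> M"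
  shows "hrho x y < M \<longleftrightarrow>
    (cmod (x - y))\<^sup>2 < (sinh (M / 2))\<^sup>2 * ((1 - (cmod x)\<^sup>2) * (1 - (cmod y)\<^sup>2))"
proof -
  have pos: "0 < (1 - (cmod x)\<^sup>2) * (1 - (cmod y)\<^sup>2)"
    using assms by (simp add: abs_square_less_1)
  have "hrho x y < M \<longleftrightarrow> sinh (hrho x y / 2) < sinh (M / 2)"
    by simp
  also have "\<dots> \<longleftrightarrow> (sinh (hrho x y / 2))\<^sup>2 < (sinh (M / 2))\<^sup>2"
  proof -
    have "0 \<le> sinh (hrho x y / 2)" "0 \<le> sinh (M / 2)"
      using hrho_nonneg[OF assms(1,2)] assms(3) by simp_all
    then show ?thesis
      by (meson power_less_imp_less_base power_strict_mono pos2)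
  qed
  finally show ?thesis
    unfolding sinh_half_hrho_sq[OF assms(1,2)] using pos by (simp add: divide_less_eq)
qed

lemma cosh_half_hrho:
  assumes "cmod a < 1" "cmod b < 1"
  shows "cosh (hrho a b / 2) = cmod (1 - cnj a * b) / sqrt ((1 - (cmod a)\<^sup>2) * (1 - (cmod b)\<^sup>2))"
proof -
  define P where "P = (1 - (cmod a)\<^sup>2) * (1 - (cmod b)\<^sup>2)"
  have "P > 0"
    unfolding P_def using assms by (simp add: abs_square_less_1)
  have "(cosh (hrho a b / 2))\<^sup>2 = (sinh (hrho a b / 2))\<^sup>2 + 1"
    by (rule cosh_square_eq)
  also have "\<dots> = (cmod (1 - cnj a * b))\<^sup>2 / P"
    unfolding sinh_half_hrho_sq[OF assms] cmod_one_minus_cnj_mult_sq P_def[symmetric]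
    using \<open>P > 0\<close> by (simp add: field_simps)
  also have "\<dots> = (cmod (1 - cnj a * b) / sqrt P)\<^sup>2"
    using \<open>P > 0\<close> by (simp add: power_divide)
  finally show ?thesis
    unfolding P_def[symmetric] by (rule power2_eq_imp_eq) (use \<open>P > 0\<close> in auto)
qed

lemma hrho_on_ray:
  assumes "cmod z < s" "cmod z < t"
  shows "hrho (z / of_real s) (z / of_real t)
    = 2 * arsinh (sqrt ((cmod z)\<^sup>2 * (s - t)\<^sup>2 / ((s\<^sup>2 - (cmod z)\<^sup>2) * (t\<^sup>2 - (cmod z)\<^sup>2))))"
proof -
  have "s > 0" "t > 0"
    using assms norm_ge_zero[of z] by linarith+
  have "z / of_real s - z / of_real t = z * of_real ((t - s) / (s * t))"
    using \<open>s > 0\<close> \<open>t > 0\<close> by (simp add: field_simps)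
  then have diff: "(cmod (z / of_real s - z / of_real t))\<^sup>2 = (cmod z)\<^sup>2 * ((t - s) / (s * t))\<^sup>2"
    by (simp only: norm_mult norm_of_real power_mult_distrib power2_abs)
  have compl: "1 - (cmod (z / of_real u))\<^sup>2 = (u\<^sup>2 - (cmod z)\<^sup>2) / u\<^sup>2" if "u > 0" for u
    using that by (simp add: norm_divide power_divide field_simps)
  have ratio: "(cmod z)\<^sup>2 * ((t - s) / (s * t))\<^sup>2 / ((s\<^sup>2 - (cmod z)\<^sup>2) / s\<^sup>2 * ((t\<^sup>2 - (cmod z)\<^sup>2) / t\<^sup>2))
      = (cmod z)\<^sup>2 * (s - t)\<^sup>2 / ((s\<^sup>2 - (cmod z)\<^sup>2) * (t\<^sup>2 - (cmod z)\<^sup>2))"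
    using \<open>s > 0\<close> \<open>t > 0\<close> by (simp add: field_simps power2_commute)
  show ?thesis
    unfolding hrho_eq_arsinh_sqrt diff compl[OF \<open>s > 0\<close>] compl[OF \<open>t > 0\<close>] ratio ..
qed

lemma hrho_on_ray_midpoint:
  fixes z :: complex and \<sigma> q w :: real
  assumes "0 < \<sigma>" "0 < q" "0 < w" "(cmod z)\<^sup>2 = \<sigma>\<^sup>2 - q\<^sup>2 * w\<^sup>2"
  shows "hrho (z / of_real (\<sigma> + w\<^sup>2)) (z / of_real (\<sigma> + q * w))
       = hrho (z / of_real (\<sigma> + q * w)) (z / of_real (\<sigma> + q\<^sup>2))"
proof -
  define K where "K = 2 * \<sigma> + w\<^sup>2 + q\<^sup>2"
  have "0 < K"
    unfolding K_def using assms by (simp add: add_pos_nonneg)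
  have gap_s: "(\<sigma> + w\<^sup>2)\<^sup>2 - (cmod z)\<^sup>2 = w\<^sup>2 * K"
    and gap_t: "(\<sigma> + q * w)\<^sup>2 - (cmod z)\<^sup>2 = 2 * q * w * (\<sigma> + q * w)"
    and gap_u: "(\<sigma> + q\<^sup>2)\<^sup>2 - (cmod z)\<^sup>2 = q\<^sup>2 * K"
    unfolding assms(4) K_def by (simp_all add: power2_eq_square algebra_simps)
  have in_disk: "cmod z < s" if "0 < s" "0 < s\<^sup>2 - (cmod z)\<^sup>2" for s
    using that by (simp add: power2_less_imp_less)
  have "cmod z < \<sigma> + w\<^sup>2" "cmod z < \<sigma> + q * w" "cmod z < \<sigma> + q\<^sup>2"
    using assms(1-3) \<open>0 < K\<close>
    by (intro in_disk; simp add: gap_s gap_t gap_u add_pos_nonneg)+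
  moreover have "(\<sigma> + w\<^sup>2) - (\<sigma> + q * w) = w * (w - q)" "(\<sigma> + q * w) - (\<sigma> + q\<^sup>2) = q * (w - q)"
    by (simp_all add: power2_eq_square algebra_simps)
  moreover have "(cmod z)\<^sup>2 * (w * d)\<^sup>2 / (w\<^sup>2 * K * T) = (cmod z)\<^sup>2 * (q * d)\<^sup>2 / (T * (q\<^sup>2 * K))"
    for d T :: real
    using assms(2,3) by (simp add: power_mult_distrib)
  ultimately show ?thesis
    by (simp only: hrho_on_ray gap_s gap_t gap_u)
qed

lemma sublevel_eq_ball:
  fixes m a :: complex and k :: real
  assumes "0 < 1 + k" "(cmod (m - a))\<^sup>2 = k * (1 - (cmod a)\<^sup>2)"
  shows "{y. (cmod (m - y))\<^sup>2 < k * (1 - (cmod y)\<^sup>2)}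
       = ball (m / of_real (1 + k)) (cmod (m / of_real (1 + k) - a))"
proof -
  define c where "c = m / of_real (1 + k)"
  txt \<open>Completing the square leaves a constant, which the boundary point a identifies.\<close>
  have expand: "(cmod (m - y))\<^sup>2 - k * (1 - (cmod y)\<^sup>2)
      = (1 + k) * (cmod (c - y))\<^sup>2 + (k * (cmod m)\<^sup>2 / (1 + k) - k)" for y
  proof -
    have Re_c: "Re (c * cnj y) = Re (m * cnj y) / (1 + k)"
      and norm_c: "(cmod c)\<^sup>2 = (cmod m)\<^sup>2 / (1 + k)\<^sup>2"
      unfolding c_def norm_divide norm_of_real using assms(1)
      by (simp_all add: power_divide flip: Re_divide_of_real)
    have id: "M - 2 * R + Y - k * (1 - Y) = t * (M / t\<^sup>2 - 2 * (R / t) + Y) + (k * M / t - k)"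
      if "k = t - 1" "t \<noteq> 0" for M R Y t :: real
      unfolding that(1) using that(2) by (simp add: field_simps power2_eq_square)
    show ?thesis
      unfolding cmod_diff_sq Re_c norm_c using assms(1) by (intro id) simp_all
  qed
  have phi: "(cmod (m - y))\<^sup>2 - k * (1 - (cmod y)\<^sup>2) = (1 + k) * ((cmod (c - y))\<^sup>2 - (cmod (c - a))\<^sup>2)"
    for y
    using expand[of y] expand[of a] assms(2) by (simp add: right_diff_distrib)
  have sublevel_iff: "(cmod (m - y))\<^sup>2 < k * (1 - (cmod y)\<^sup>2) \<longleftrightarrow> cmod (c - y) < cmod (c - a)" for y
  proof -
    have "(cmod (m - y))\<^sup>2 < k * (1 - (cmod y)\<^sup>2) \<longleftrightarrow> (1 + k) * ((cmod (c - y))\<^sup>2 - (cmod (c - a))\<^sup>2) < 0"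
      using phi[of y] by linarith
    also have "\<dots> \<longleftrightarrow> (cmod (c - y))\<^sup>2 < (cmod (c - a))\<^sup>2"
      using assms(1) by (simp add: mult_less_0_iff)
    also have "\<dots> \<longleftrightarrow> cmod (c - y) < cmod (c - a)"
      using power2_less_imp_less[of "cmod (c - y)" "cmod (c - a)"]
        power_strict_mono[of "cmod (c - y)" "cmod (c - a)" 2] by auto
    finally show ?thesis .
  qed
  show ?thesis
    unfolding c_def[symmetric]
    by (simp only: set_eq_iff mem_Collect_eq mem_ball dist_norm sublevel_iff simp_thms)
qed

lemma hball_eq_ball:
  assumes "cmod m < 1" "cmod a < 1"
  defines "k \<equiv> (sinh (hrho m a / 2))\<^sup>2 * (1 - (cmod m)\<^sup>2)"
  shows "hball m (hrho m a) = ball (m / of_real (1 + k)) (cmod (m / of_real (1 + k) - a))"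
proof -
  have "0 < 1 - (cmod m)\<^sup>2" "0 < 1 - (cmod a)\<^sup>2"
    using assms(1,2) by (simp_all add: abs_square_less_1)
  then have "0 \<le> k"
    unfolding k_def by simp
  have on_circle: "(cmod (m - a))\<^sup>2 = k * (1 - (cmod a)\<^sup>2)"
    unfolding k_def sinh_half_hrho_sq[OF assms(1,2)]
    using \<open>0 < 1 - (cmod m)\<^sup>2\<close> \<open>0 < 1 - (cmod a)\<^sup>2\<close> by simp
  have "hball m (hrho m a) = {y. (cmod (m - y))\<^sup>2 < k * (1 - (cmod y)\<^sup>2)}"
  proof (intro set_eqI iffI)
    fix y
    assume "y \<in> hball m (hrho m a)"
    then show "y \<in> {y. (cmod (m - y))\<^sup>2 < k * (1 - (cmod y)\<^sup>2)}"
      unfolding hball_def k_def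
      using hrho_less_iff[OF assms(1) _ hrho_nonneg[OF assms(1,2)], of y] by (simp add: mult.assoc)
  next
    fix y
    assume y: "y \<in> {y. (cmod (m - y))\<^sup>2 < k * (1 - (cmod y)\<^sup>2)}"
    have "cmod y < 1"
    proof (rule ccontr)
      assume "\<not> cmod y < 1"
      then have "1 - (cmod y)\<^sup>2 \<le> 0"
        by (simp add: one_le_power)
      then have "k * (1 - (cmod y)\<^sup>2) \<le> 0"
        using \<open>0 \<le> k\<close> by (simp add: mult_nonneg_nonpos)
      moreover have "(cmod (m - y))\<^sup>2 < k * (1 - (cmod y)\<^sup>2)"
        using y by simp
      ultimately show False
        using zero_le_power2[of "cmod (m - y)"] by linarith
    qed
    with y show "y \<in> hball m (hrho m a)"
      unfolding hball_def k_def
      using hrho_less_iff[OF assms(1) _ hrho_nonneg[OF assms(1,2)], of y] by (simp add: mult.assoc)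
  qed
  also have "\<dots> = ball (m / of_real (1 + k)) (cmod (m / of_real (1 + k) - a))"
    using \<open>0 \<le> k\<close> on_circle by (intro sublevel_eq_ball) simp_all
  finally show ?thesis .
qed

locale disk_pair =
  fixes a b :: complex
  assumes a_in_disk: "cmod a < 1" and b_in_disk: "cmod b < 1"
begin

definition \<alpha> :: complex
  where "\<alpha> = a * of_real (1 - (cmod b)\<^sup>2) + b * of_real (1 - (cmod a)\<^sup>2)"

definition \<sigma> :: real
  where "\<sigma> = 1 - (cmod a)\<^sup>2 * (cmod b)\<^sup>2"

definition q :: real
  where "q = sqrt ((1 - (cmod a)\<^sup>2) * (1 - (cmod b)\<^sup>2))"

definition w :: real
  where "w = cmod (1 - cnj a * b)"

definition cen :: complex
  where "cen = \<alpha> / of_real (\<sigma> + w\<^sup>2)"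

definition p :: complex
  where "p = \<alpha> / of_real (\<sigma> + q\<^sup>2)"

definition mid :: complex
  where "mid = \<alpha> / of_real (\<sigma> + q * w)"

lemma cmod_cnj_mult_less_1: "cmod (cnj a * b) < 1"
proof -
  have "cmod (cnj a * b) = cmod a * cmod b"
    by (simp add: norm_mult)
  also have "\<dots> < 1"
    using a_in_disk b_in_disk mult_strict_mono[of "cmod a" 1 "cmod b" 1] by simp
  finally show ?thesis .
qed

lemma sigma_pos: "0 < \<sigma>"
proof -
  have "(cmod (cnj a * b))\<^sup>2 < 1"
    using cmod_cnj_mult_less_1 by (simp add: abs_square_less_1)
  then show ?thesis
    unfolding \<sigma>_def by (simp add: norm_mult power_mult_distrib)
qed

lemma q_pos: "0 < q"
  unfolding q_def using a_in_disk b_in_disk by (simp add: abs_square_less_1)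

lemma q_sq: "q\<^sup>2 = (1 - (cmod a)\<^sup>2) * (1 - (cmod b)\<^sup>2)"
  unfolding q_def using a_in_disk b_in_disk by (simp add: abs_square_le_1 less_imp_le)

lemma w_pos: "0 < w"
  unfolding w_def using cmod_cnj_mult_less_1 by auto

lemma w_sq: "w\<^sup>2 = 1 - 2 * Re (cnj a * b) + (cmod a)\<^sup>2 * (cmod b)\<^sup>2"
  unfolding w_def cmod_diff_sq by (simp add: norm_mult power_mult_distrib)

lemma cmod_alpha_sq: "(cmod \<alpha>)\<^sup>2 = \<sigma>\<^sup>2 - q\<^sup>2 * w\<^sup>2"
proof -
  have "(cmod \<alpha>)\<^sup>2 = (cmod a)\<^sup>2 * (1 - (cmod b)\<^sup>2)\<^sup>2 + (cmod b)\<^sup>2 * (1 - (cmod a)\<^sup>2)\<^sup>2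
      + 2 * (1 - (cmod a)\<^sup>2) * (1 - (cmod b)\<^sup>2) * Re (cnj a * b)"
    unfolding \<alpha>_def by (simp only: cmod_power2) (simp add: power2_eq_square algebra_simps)
  then show ?thesis
    unfolding \<sigma>_def q_sq w_sq by (simp add: power2_eq_square algebra_simps)
qed

lemma two_Re_a_cnj_alpha: "2 * Re (a * cnj \<alpha>) = 2 * \<sigma> - (1 - (cmod a)\<^sup>2) * (\<sigma> + w\<^sup>2)"
proof -
  have "Re (a * cnj \<alpha>) = (cmod a)\<^sup>2 * (1 - (cmod b)\<^sup>2) + (1 - (cmod a)\<^sup>2) * Re (cnj a * b)"
    unfolding \<alpha>_def by (simp only: cmod_power2) (simp add: power2_eq_square algebra_simps)
  then show ?thesis
    unfolding \<sigma>_def w_sq by (simp add: algebra_simps)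
qed

lemma cen_denom: "2 - a * cnj b - cnj a * b = of_real (\<sigma> + w\<^sup>2)"
  unfolding \<sigma>_def w_sq by (simp add: complex_eq_iff)

lemma p_denom: "2 - (cmod a)\<^sup>2 - (cmod b)\<^sup>2 = \<sigma> + q\<^sup>2"
  unfolding \<sigma>_def q_sq by (simp add: algebra_simps)

lemma hrho_cen_mid_eq_hrho_mid_p: "hrho cen mid = hrho mid p"
  unfolding cen_def mid_def p_def
  using hrho_on_ray_midpoint[OF sigma_pos q_pos w_pos cmod_alpha_sq] .

lemma mid_denom_pos: "0 < \<sigma> + q * w"
  using sigma_pos q_pos w_pos by (simp add: add_pos_pos)

lemma cmod_mid_sq: "(cmod mid)\<^sup>2 = (\<sigma> - q * w) / (\<sigma> + q * w)"
proof -
  have "(cmod \<alpha>)\<^sup>2 = (\<sigma> - q * w) * (\<sigma> + q * w)"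
    unfolding cmod_alpha_sq by (simp add: power2_eq_square algebra_simps)
  then show ?thesis
    unfolding mid_def norm_divide norm_of_real power_divide
    using mid_denom_pos by (simp add: power2_eq_square)
qed

lemma one_minus_cmod_mid_sq: "1 - (cmod mid)\<^sup>2 = 2 * q * w / (\<sigma> + q * w)"
  unfolding cmod_mid_sq using mid_denom_pos by (simp add: field_simps)

lemma mid_in_disk: "cmod mid < 1"
proof -
  have "0 < 1 - (cmod mid)\<^sup>2"
    unfolding one_minus_cmod_mid_sq using q_pos w_pos mid_denom_pos by simp
  then show ?thesis
    by (simp add: abs_square_less_1)
qed

lemma cmod_mid_minus_a_sq: "(cmod (mid - a))\<^sup>2 = w * (w - q) * (1 - (cmod a)\<^sup>2) / (\<sigma> + q * w)"
proof -
  have "Re (mid * cnj a) = Re (a * cnj \<alpha>) / (\<sigma> + q * w)"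
  proof -
    have "Re (\<alpha> * cnj a) = Re (a * cnj \<alpha>)"
      by (simp add: mult.commute)
    then show ?thesis
      unfolding mid_def by (simp flip: Re_divide_of_real)
  qed
  then have "2 * Re (mid * cnj a) = (2 * \<sigma> - (1 - (cmod a)\<^sup>2) * (\<sigma> + w\<^sup>2)) / (\<sigma> + q * w)"
    by (simp flip: two_Re_a_cnj_alpha)
  then show ?thesis
    unfolding cmod_diff_sq cmod_mid_sq using mid_denom_pos
    by (simp add: field_simps power2_eq_square)
qed

lemma sinh_quarter_hrho_sq: "(sinh (hrho a b / 4))\<^sup>2 = (w - q) / (2 * q)"
proof -
  have "w / q = cosh (2 * (hrho a b / 4))"
    using cosh_half_hrho[OF a_in_disk b_in_disk] by (simp add: w_def q_def)
  also have "\<dots> = 1 + 2 * (sinh (hrho a b / 4))\<^sup>2"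
    unfolding cosh_double cosh_square_eq by simp
  finally show ?thesis
    using q_pos by (simp add: field_simps)
qed

lemma hrho_mid_a: "hrho mid a = hrho a b / 2"
proof -
  have "(cmod (mid - a))\<^sup>2 / ((1 - (cmod mid)\<^sup>2) * (1 - (cmod a)\<^sup>2)) = (sinh (hrho a b / 4))\<^sup>2"
  proof -
    have "0 < 1 - (cmod a)\<^sup>2"
      using a_in_disk by (simp add: abs_square_less_1)
    moreover have "w * (w - q) * x / D / (2 * q * w / D * x) = (w - q) / (2 * q)"
      if "x \<noteq> 0" "D \<noteq> 0" for x D :: real
      using that q_pos w_pos by (simp add: field_simps)
    ultimately show ?thesis
      unfolding cmod_mid_minus_a_sq one_minus_cmod_mid_sq sinh_quarter_hrho_sq
      using mid_denom_pos q_pos w_pos by simp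
  qed
  moreover have "0 \<le> sinh (hrho a b / 4)"
    using hrho_nonneg[OF a_in_disk b_in_disk] by simp
  ultimately show ?thesis
    unfolding hrho_eq_arsinh_sqrt[of mid a] by (simp add: arsinh_sinh_real)
qed

lemma cen_eq_mid_div: "cen = mid / of_real (1 + (sinh (hrho mid a / 2))\<^sup>2 * (1 - (cmod mid)\<^sup>2))"
proof -
  have scale: "1 + (sinh (hrho mid a / 2))\<^sup>2 * (1 - (cmod mid)\<^sup>2) = (\<sigma> + w\<^sup>2) / (\<sigma> + q * w)"
  proof -
    have half: "hrho mid a / 2 = hrho a b / 4"
      by (simp add: hrho_mid_a)
    have "1 + (w - q) / (2 * q) * (2 * q * w / D) = (D + w\<^sup>2 - q * w) / D"
      if "D \<noteq> 0" for D :: real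
      using that q_pos by (simp add: field_simps power2_eq_square)
    then show ?thesis
      unfolding half one_minus_cmod_mid_sq sinh_quarter_hrho_sq using mid_denom_pos by simp
  qed
  have rescale: "z / of_real E = z / of_real D / of_real (E / D)"
    if "D \<noteq> 0" "E \<noteq> 0" for z :: complex and D E :: real
    using that by (simp add: field_simps)
  have "0 < \<sigma> + w\<^sup>2"
    using sigma_pos by (simp add: add_pos_nonneg)
  then show ?thesis
    unfolding scale unfolding cen_def mid_def using mid_denom_pos by (intro rescale) simp_all
qed

end

theorem lemma2p15:
  fixes a b :: complex
  assumes "cmod a < 1" "cmod b < 1" "a \<noteq> 0" "b \<noteq> 0" "a \<noteq> b"
    and "cmod a \<noteq> cmod b"
    and "\<exists>c::complex. \<exists>r::real. r > 0 \<and> (cmod c)\<^sup>2 = 1 + r\<^sup>2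
            \<and> cmod (a - c) = r \<and> cmod (b - c) = r"
  shows "let \<alpha> = a * of_real (1 - (cmod b)\<^sup>2) + b * of_real (1 - (cmod a)\<^sup>2);
             cen = \<alpha> / (2 - a * cnj b - cnj a * b);
             p = \<alpha> / of_real (2 - (cmod a)\<^sup>2 - (cmod b)\<^sup>2);
             m = \<alpha> / of_real (1 - (cmod a)\<^sup>2 * (cmod b)\<^sup>2
                   + sqrt ((1 - (cmod a)\<^sup>2) * (1 - (cmod b)\<^sup>2)) * cmod (1 - cnj a * b))
         in hrho cen m = hrho m p \<and> ball cen (cmod (cen - a)) = hball m (hrho a b / 2)"
proof -
  txt \<open>Only \<open>|a|, |b| < 1\<close> is used: the remaining hypotheses make cen and p the geometric
    points of the paper, but the identities hold for all a, b in the disk.\<close>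
  interpret disk_pair a b
    using assms(1,2) by unfold_locales
  have "hball mid (hrho a b / 2) = hball mid (hrho mid a)"
    by (simp only: hrho_mid_a)
  also have "\<dots> = ball cen (cmod (cen - a))"
    unfolding cen_eq_mid_div by (rule hball_eq_ball[OF mid_in_disk a_in_disk])
  finally have "ball cen (cmod (cen - a)) = hball mid (hrho a b / 2)" ..
  with hrho_cen_mid_eq_hrho_mid_p show ?thesis
    unfolding Let_def cen_denom p_denom \<alpha>_def[symmetric] \<sigma>_def[symmetric] q_def[symmetric]
      w_def[symmetric] cen_def[symmetric] p_def[symmetric] mid_def[symmetric]
    by simp
qed

end
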